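(* Let $\alpha\ge0$, $\beta\ge0$, $\gamma<0$, $\omega^2=1$, $c,a\in\mathbb{R}$ with $ca>0$, $N\ge2$, and $r>0$. Consider $$\dot{x}_i=y_i+\frac{ca}{N}\sum_{j=1}^N(x_j-x_i),\qquad \dot{y}_i=-(\alpha x_i^2+\beta y_i^2-\gamma)y_i-\omega^2x_i+\frac{ca}{N}\sum_{j=1}^N(y_j-y_i),\quad i=1,\dots,N.$$ Suppose one of the following holds: (1) $\alpha=0$ and $3\beta r^2>\gamma-ca$; (2) $\alpha\neq0$, $\alpha>3\beta$, $r^2\le\frac{ca\alpha-3ca\beta}{\alpha^2}$, and $3\beta r^2>\gamma-ca$; (3) $\alpha\neq0$, $\alpha<3\beta$, $r^2\le\frac{3ca\beta-ca\alpha}{\alpha^2}$, and $\alpha r^2>\gamma-ca$; (4) $3ca\alpha\beta+\alpha^2(ca-\gamma)>0$, $r^2\ge\max\{\frac{ca\alpha-3ca\beta}{\alpha^2},\frac{3ca\beta-ca\alpha}{\alpha^2}\}$, and $\frac{ca\alpha+3ca\beta-2\sqrt{3c^2a^2\alpha\beta+\alpha^2ca(ca-\gamma)}}{\alpha^2}<r^2<\frac{ca\alpha+3ca\beta+2\sqrt{3c^2a^2\alpha\beta+\alpha^2ca(ca-\gamma)}}{\alpha^2}$. If $x_i(0)^2+y_i(0)^2\le r^2$ for all $i=1,\dots,N$, then $|x_i(t)-x_j(t)|+|y_i(t)-y_j(t)|\to0$ exponentially as $t\to\infty$ for all $i,j$ (complete synchronization). *)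

theory Defs
  imports "HOL-Analysis.Analysis"
begin

definition coupled_solution ::
  "real \<Rightarrow> real \<Rightarrow> real \<Rightarrow> real \<Rightarrow> real \<Rightarrow> real \<Rightarrow> nat \<Rightarrow>
   (real \<Rightarrow> nat \<Rightarrow> real) \<Rightarrow> (real \<Rightarrow> nat \<Rightarrow> real) \<Rightarrow> bool" where
  "coupled_solution \<alpha> \<beta> \<gamma> \<omega> c a N x y \<longleftrightarrow>
     (\<forall>i<N. \<forall>t\<ge>0.
        ((\<lambda>s. x s i) has_real_derivative
            (y t i + (c * a / real N) * (\<Sum>j<N. x t j - x t i))) (at t within {0..}) \<and>
        ((\<lambda>s. y s i) has_real_derivative
            (- (\<alpha> * (x t i)^2 + \<beta> * (y t i)^2 - \<gamma>) * y t i - \<omega>^2 * x t i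
             + (c * a / real N) * (\<Sum>j<N. y t j - y t i))) (at t within {0..}))"

end

theory Submission
  imports Defs
begin

text \<open>
  Each oscillator's energy \<open>x\<^sub>i\<^sup>2 + y\<^sub>i\<^sup>2\<close> is dissipated by the damping and pulled by the
  coupling towards the energies of the others, so \<open>\<Sum>\<^sub>i max (x\<^sub>i\<^sup>2 + y\<^sub>i\<^sup>2 - r\<^sup>2) 0\<^sup>2\<close>
  is nonincreasing and the disk of radius \<open>r\<close> is invariant.
  For two oscillators the mean value theorem evaluates the difference of their damping terms
  at a point \<open>(X, Y)\<close> of that disk, so their squared distance \<open>D = u\<^sup>2 + v\<^sup>2\<close> (with \<open>u\<close>, \<open>v\<close>
  the differences of the coordinates) satisfies \<open>D' = -2 q(u, v)\<close>
  for a quadratic form \<open>q\<close> of trace at most \<open>2ca + (\<alpha> + 3\<beta>) r\<^sup>2 - \<gamma>\<close> and determinant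
  \<open>sync_det \<alpha> \<beta> \<gamma> (c * a) (X\<^sup>2) (Y\<^sup>2)\<close>. The conditions on \<open>r\<close> are what makes this determinant
  bounded below by some \<open>m > 0\<close> on the disk; then \<open>q \<ge> \<kappa> (u\<^sup>2 + v\<^sup>2)\<close> with
  \<open>\<kappa> = m / trace\<close>, and \<open>D\<close> decays like \<open>exp (-2 \<kappa> t)\<close>.
\<close>

lemma nonincreasing_on_halfline:
  fixes f f' :: "real \<Rightarrow> real"
  assumes "\<And>t. t \<ge> 0 \<Longrightarrow> (f has_real_derivative f' t) (at t within {0..})"
    and "\<And>t. t \<ge> 0 \<Longrightarrow> f' t \<le> 0" and "t \<ge> 0"
  shows "f t \<le> f 0"
proof (rule DERIV_nonpos_imp_decreasing_open[OF \<open>t \<ge> 0\<close>])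
  fix s assume s: "0 < s" "s < t"
  have "at s within {0..} = at s"
    by (rule at_within_interior) (use s in auto)
  then show "\<exists>y. DERIV f s :> y \<and> y \<le> 0" using assms(1,2)[of s] s by auto
next
  show "continuous_on {0..t} f"
    by (rule DERIV_continuous_on[where D=f'])
       (rule has_field_derivative_subset[OF assms(1)], auto)
qed

lemma exp_decay_of_deriv_le:
  fixes f f' :: "real \<Rightarrow> real"
  assumes deriv: "\<And>t. t \<ge> 0 \<Longrightarrow> (f has_real_derivative f' t) (at t within {0..})"
    and decay: "\<And>t. t \<ge> 0 \<Longrightarrow> f' t \<le> - K * f t" and "t \<ge> 0"
  shows "f t \<le> f 0 * exp (- K * t)"
proof -
  have "f t * exp (K * t) \<le> f 0 * exp (K * 0)"
  proof (rule nonincreasing_on_halfline[where f = "\<lambda>t. f t * exp (K * t)"])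
    fix s :: real assume "s \<ge> 0"
    show "((\<lambda>t. f t * exp (K * t)) has_real_derivative (f' s + K * f s) * exp (K * s))
            (at s within {0..})"
      by (auto intro!: derivative_eq_intros deriv[OF \<open>s \<ge> 0\<close>] simp: algebra_simps)
    show "(f' s + K * f s) * exp (K * s) \<le> 0"
      using decay[OF \<open>s \<ge> 0\<close>] by (simp add: mult_nonpos_nonneg)
  qed fact
  then show ?thesis
    by (simp add: exp_minus field_simps)
qed

definition pos_sq :: "real \<Rightarrow> real" where
  "pos_sq z = (max z 0)^2"

lemma has_real_derivative_pos_sq: "(pos_sq has_real_derivative 2 * max z 0) (at z)"
proof -
  consider "z > 0" | "z < 0" | "z = 0" by linarith
  then show ?thesis
  proof cases
    case 1
    have "((\<lambda>w. w^2) has_real_derivative 2 * max z 0) (at z)"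
      using 1 by (auto intro!: derivative_eq_intros)
    then show ?thesis
      by (rule has_field_derivative_transform_within_open[where S="{0<..}"])
         (use 1 in \<open>auto simp: pos_sq_def\<close>)
  next
    case 2
    have "((\<lambda>w. 0) has_real_derivative 2 * max z 0) (at z)"
      using 2 by (auto intro!: derivative_eq_intros)
    then show ?thesis
      by (rule has_field_derivative_transform_within_open[where S="{..<0}"])
         (use 2 in \<open>auto simp: pos_sq_def\<close>)
  next
    case 3
    have "((\<lambda>h::real. max h 0) \<longlongrightarrow> 0) (at 0)"
      using tendsto_max[OF tendsto_ident_at[of "0::real" UNIV] tendsto_const[of "0::real"]] by simp
    moreover have "\<forall>\<^sub>F h in at 0. max h 0 = (pos_sq (0 + h) - pos_sq 0) / h"
      unfolding eventually_at_filter by (auto simp: pos_sq_def power2_eq_square max_def)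
    ultimately have "((\<lambda>h. (pos_sq (0 + h) - pos_sq 0) / h) \<longlongrightarrow> 0) (at 0)"
      using tendsto_cong by fastforce
    then show ?thesis using 3 by (simp add: DERIV_def)
  qed
qed

lemma abs_add_abs_le_of_sq_le_exp:
  fixes u v D K t :: real
  assumes "u^2 + v^2 \<le> D * exp (- 2 * K * t)"
  shows "\<bar>u\<bar> + \<bar>v\<bar> \<le> sqrt (2 * D) * exp (- K * t)"
proof -
  have "0 \<le> u^2 + v^2" by simp
  then have "D \<ge> 0"
    using assms by (smt (verit) exp_gt_zero zero_le_mult_iff)
  have "(\<bar>u\<bar> + \<bar>v\<bar>)^2 = 2 * (u^2 + v^2) - (\<bar>u\<bar> - \<bar>v\<bar>)^2"
    by (simp add: power2_eq_square algebra_simps)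
  also have "\<dots> \<le> 2 * (D * exp (- 2 * K * t))"
    using assms by (smt (verit) zero_le_power2)
  also have "exp (- 2 * K * t) = exp (- K * t)^2"
    by (simp add: power2_eq_square flip: exp_add)
  also have "2 * (D * exp (- K * t)^2) = (sqrt (2 * D) * exp (- K * t))^2"
    using \<open>D \<ge> 0\<close> by (simp add: power_mult_distrib)
  finally show ?thesis
    by (rule power2_le_imp_le) (use \<open>D \<ge> 0\<close> in simp)
qed

lemma sum_pos_part_mult_laplacian_nonpos:
  fixes z :: "nat \<Rightarrow> real"
  shows "(\<Sum>i<N. max (z i) 0 * (\<Sum>j<N. z j - z i)) \<le> 0"
proof -
  define w where "w i = max (z i) 0" for i
  have "(\<Sum>i<N. w i * (\<Sum>j<N. z j - z i)) = (\<Sum>i<N. \<Sum>j<N. w i * z j - w i * z i)"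
    by (simp add: sum_distrib_left right_diff_distrib)
  also have "\<dots> \<le> (\<Sum>i<N. \<Sum>j<N. w i * w j - w i * w i)"
  proof (intro sum_mono)
    fix i j
    have "w i * z j \<le> w i * w j" by (rule mult_left_mono) (auto simp: w_def)
    moreover have "w i * z i = w i * w i" by (simp add: w_def max_def)
    ultimately show "w i * z j - w i * z i \<le> w i * w j - w i * w i" by linarith
  qed
  also have "\<dots> = - (1/2) * (\<Sum>i<N. \<Sum>j<N. (w i - w j)^2)"
  proof -
    have "(\<Sum>i<N. \<Sum>j<N. w j * w j) = (\<Sum>i<N. \<Sum>j<N. w i * w i)"
      by (rule sum.swap)
    moreover have "(\<Sum>i<N. \<Sum>j<N. (w i - w j)^2) = (\<Sum>i<N. \<Sum>j<N. w i * w i)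
        + (\<Sum>i<N. \<Sum>j<N. w j * w j) - 2 * (\<Sum>i<N. \<Sum>j<N. w i * w j)"
      by (simp add: power2_eq_square algebra_simps sum.distrib sum_subtractf sum_distrib_left)
    moreover have "(\<Sum>i<N. \<Sum>j<N. w i * w j - w i * w i)
        = (\<Sum>i<N. \<Sum>j<N. w i * w j) - (\<Sum>i<N. \<Sum>j<N. w i * w i)"
      by (simp only: sum_subtractf)
    ultimately show ?thesis by linarith
  qed
  also have "\<dots> \<le> 0" by (simp add: sum_nonneg)
  finally show ?thesis by (simp add: w_def)
qed

definition coupled_rhs_x :: "real \<Rightarrow> nat \<Rightarrow> (nat \<Rightarrow> real) \<Rightarrow> (nat \<Rightarrow> real) \<Rightarrow> nat \<Rightarrow> real" where
  "coupled_rhs_x k N x y i = y i + (k / real N) * (\<Sum>j<N. x j - x i)"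

definition damping :: "real \<Rightarrow> real \<Rightarrow> real \<Rightarrow> real \<Rightarrow> real \<Rightarrow> real" where
  "damping \<alpha> \<beta> \<gamma> x y = (\<alpha> * x^2 + \<beta> * y^2 - \<gamma>) * y"

definition coupled_rhs_y ::
  "real \<Rightarrow> real \<Rightarrow> real \<Rightarrow> real \<Rightarrow> real \<Rightarrow> nat \<Rightarrow> (nat \<Rightarrow> real) \<Rightarrow> (nat \<Rightarrow> real) \<Rightarrow> nat \<Rightarrow> real"
where
  "coupled_rhs_y \<alpha> \<beta> \<gamma> \<omega> k N x y i =
     - damping \<alpha> \<beta> \<gamma> (x i) (y i) - \<omega>^2 * x i + (k / real N) * (\<Sum>j<N. y j - y i)"

lemma coupled_solution_has_derivative:
  assumes "coupled_solution \<alpha> \<beta> \<gamma> \<omega> c a N x y" and "i < N" and "t \<ge> 0"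
  shows "((\<lambda>s. x s i) has_real_derivative coupled_rhs_x (c * a) N (x t) (y t) i) (at t within {0..})"
    and "((\<lambda>s. y s i) has_real_derivative coupled_rhs_y \<alpha> \<beta> \<gamma> \<omega> (c * a) N (x t) (y t) i)
           (at t within {0..})"
  using assms unfolding coupled_solution_def coupled_rhs_x_def coupled_rhs_y_def damping_def
    minus_mult_left by blast+

lemma energy_rhs_le_laplacian:
  assumes "\<alpha> \<ge> 0" and "\<beta> \<ge> 0" and "\<gamma> \<le> 0" and "\<omega>^2 = 1" and "k \<ge> 0"
  shows "2 * x i * coupled_rhs_x k N x y i + 2 * y i * coupled_rhs_y \<alpha> \<beta> \<gamma> \<omega> k N x y i
           \<le> k / real N * (\<Sum>j<N. (x j^2 + y j^2) - (x i^2 + y i^2))"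
proof -
  define Sx where "Sx = (\<Sum>j<N. x j - x i)"
  define Sy where "Sy = (\<Sum>j<N. y j - y i)"
  define A where "A = \<alpha> * x i^2 + \<beta> * y i^2 - \<gamma>"
  have split: "2 * x i * coupled_rhs_x k N x y i + 2 * y i * coupled_rhs_y \<alpha> \<beta> \<gamma> \<omega> k N x y i
        = - 2 * A * y i^2 + k / real N * (2 * x i * Sx + 2 * y i * Sy)"
    using \<open>\<omega>^2 = 1\<close>
    unfolding coupled_rhs_x_def coupled_rhs_y_def damping_def Sx_def[symmetric] Sy_def[symmetric]
      A_def[symmetric]
    by (simp add: power2_eq_square algebra_simps)
  have "2 * x i * Sx + 2 * y i * Sy = (\<Sum>j<N. 2 * (x i * (x j - x i) + y i * (y j - y i)))"
    unfolding Sx_def Sy_def by (simp add: sum.distrib sum_distrib_left distrib_left mult.assoc)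
  also have "\<dots> \<le> (\<Sum>j<N. (x j^2 + y j^2) - (x i^2 + y i^2))"
  proof (rule sum_mono)
    fix j
    show "2 * (x i * (x j - x i) + y i * (y j - y i)) \<le> (x j^2 + y j^2) - (x i^2 + y i^2)"
      using zero_le_power2[of "x j - x i"] zero_le_power2[of "y j - y i"]
      by (simp add: power2_eq_square algebra_simps)
  qed
  finally have coupling: "k / real N * (2 * x i * Sx + 2 * y i * Sy)
      \<le> k / real N * (\<Sum>j<N. (x j^2 + y j^2) - (x i^2 + y i^2))"
    using \<open>k \<ge> 0\<close> by (intro mult_left_mono) simp_all
  have "\<alpha> * x i^2 \<ge> 0" and "\<beta> * y i^2 \<ge> 0"
    using assms(1,2) by simp_all
  then have "A * y i^2 \<ge> 0"
    using \<open>\<gamma> \<le> 0\<close> by (simp add: A_def)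
  then show ?thesis
    using split coupling by linarith
qed

lemma coupled_rhs_diff:
  assumes "N > 0" and "\<omega>^2 = 1"
  shows "coupled_rhs_x k N x y i - coupled_rhs_x k N x y j = (y i - y j) - k * (x i - x j)"
    and "coupled_rhs_y \<alpha> \<beta> \<gamma> \<omega> k N x y i - coupled_rhs_y \<alpha> \<beta> \<gamma> \<omega> k N x y j
           = - (damping \<alpha> \<beta> \<gamma> (x i) (y i) - damping \<alpha> \<beta> \<gamma> (x j) (y j)) - (x i - x j)
             - k * (y i - y j)"
  using assms by (simp_all add: coupled_rhs_x_def coupled_rhs_y_def sum_subtractf field_simps)

lemma damping_diff_mean_value:
  assumes "x1^2 + y1^2 \<le> R" and "x2^2 + y2^2 \<le> R"
  obtains X Y where "X^2 + Y^2 \<le> R"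
    and "damping \<alpha> \<beta> \<gamma> x1 y1 - damping \<alpha> \<beta> \<gamma> x2 y2
           = 2 * \<alpha> * X * Y * (x1 - x2) + (\<alpha> * X^2 + 3 * \<beta> * Y^2 - \<gamma>) * (y1 - y2)"
proof -
  define u where "u = x1 - x2"
  define v where "v = y1 - y2"
  define F where "F s = damping \<alpha> \<beta> \<gamma> (x2 + s * u) (y2 + s * v)" for s
  define F' where "F' s = 2 * \<alpha> * (x2 + s * u) * (y2 + s * v) * u
                     + (\<alpha> * (x2 + s * u)^2 + 3 * \<beta> * (y2 + s * v)^2 - \<gamma>) * v" for s
  have "DERIV F s :> F' s" for s
    unfolding F_def F'_def damping_def
    by (auto intro!: derivative_eq_intros simp: algebra_simps power2_eq_square)
  then obtain s where s: "0 < s" "s < 1" and mvt: "F 1 - F 0 = F' s"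
    using MVT2[OF zero_less_one, of F F'] by auto
  define X where "X = x2 + s * u"
  define Y where "Y = y2 + s * v"
  have "X^2 + Y^2 = (1 - s) * (x2^2 + y2^2) + s * (x1^2 + y1^2) - s * (1 - s) * (u^2 + v^2)"
    unfolding X_def Y_def u_def v_def by (simp add: algebra_simps power2_eq_square)
  also have "\<dots> \<le> (1 - s) * (x2^2 + y2^2) + s * (x1^2 + y1^2)"
    using s by simp
  also have "\<dots> \<le> (1 - s) * R + s * R"
    using s assms by (intro add_mono mult_left_mono) auto
  finally have "X^2 + Y^2 \<le> R" by (simp add: algebra_simps)
  moreover have "damping \<alpha> \<beta> \<gamma> x1 y1 - damping \<alpha> \<beta> \<gamma> x2 y2
           = 2 * \<alpha> * X * Y * (x1 - x2) + (\<alpha> * X^2 + 3 * \<beta> * Y^2 - \<gamma>) * (y1 - y2)"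
    using mvt unfolding F_def F'_def X_def Y_def u_def v_def by simp
  ultimately show ?thesis by (rule that)
qed

lemma quadratic_form_ge_det_div_trace:
  fixes p q b m T u v :: real
  assumes "p > 0" and "m > 0" and det: "m \<le> p * q - b^2" and trace: "p + q \<le> T"
  shows "m / T * (u^2 + v^2) \<le> p * u^2 + 2 * b * u * v + q * v^2"
proof -
  have "m \<le> p * q" using det zero_le_power2[of b] by linarith
  then have "q > 0" using \<open>p > 0\<close> \<open>m > 0\<close> by (smt (verit) mult_nonneg_nonpos)
  then have "T > 0" using trace \<open>p > 0\<close> by linarith
  define l where "l = m / T"
  have lT: "l * T = m" using \<open>T > 0\<close> by (simp add: l_def)
  have "l > 0" using \<open>T > 0\<close> \<open>m > 0\<close> by (simp add: l_def)
  have "l * T < p * T"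
    using lT \<open>m \<le> p * q\<close> \<open>p > 0\<close> \<open>q > 0\<close> trace by (smt (verit) mult_strict_left_mono)
  then have "p - l > 0" using \<open>T > 0\<close> by simp
  have "(p - l) * (q - l) - b^2 = (p * q - b^2) - l * (p + q) + l^2"
    by (simp add: algebra_simps power2_eq_square)
  moreover have "l * (p + q) \<le> l * T" using trace \<open>l > 0\<close> by simp
  ultimately have "(p - l) * (q - l) - b^2 \<ge> 0"
    using det lT zero_le_power2[of l] by linarith
  then have "0 \<le> ((p - l) * u + b * v)^2 + ((p - l) * (q - l) - b^2) * v^2"
    by simp
  also have "\<dots> = (p - l) * ((p - l) * u^2 + 2 * b * u * v + (q - l) * v^2)"
    by (simp add: algebra_simps power2_eq_square)
  finally have "(p - l) * u^2 + 2 * b * u * v + (q - l) * v^2 \<ge> 0"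
    using \<open>p - l > 0\<close> by (simp add: zero_le_mult_iff)
  then show ?thesis unfolding l_def[symmetric] by (simp add: algebra_simps)
qed

text \<open>
  The determinant of \<open>[[k, \<alpha>XY], [\<alpha>XY, \<alpha>X\<^sup>2 + 3\<beta>Y\<^sup>2 - \<gamma> + k]]\<close> in the variables
  \<open>U = X\<^sup>2\<close>, \<open>V = Y\<^sup>2\<close>. It is affine in \<open>V\<close>, so its infimum over the triangle
  \<open>U, V \<ge> 0, U + V \<le> R\<close> is taken on the edge \<open>V = R - U\<close>, where it is a convex quadratic in \<open>U\<close>.
\<close>

definition sync_det :: "real \<Rightarrow> real \<Rightarrow> real \<Rightarrow> real \<Rightarrow> real \<Rightarrow> real \<Rightarrow> real" where
  "sync_det \<alpha> \<beta> \<gamma> k U V = k * (\<alpha> * U + 3 * \<beta> * V - \<gamma> + k) - \<alpha>^2 * U * V"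

lemma sync_det_ge_of_edge:
  assumes "k \<ge> 0" and "\<alpha> \<ge> 0" and "U \<ge> 0" and "V \<ge> 0" and "U + V \<le> R"
    and "m \<le> k * (k - \<gamma>)"
    and edge: "3 * k * \<beta> < \<alpha>^2 * U \<Longrightarrow> m \<le> sync_det \<alpha> \<beta> \<gamma> k U (R - U)"
  shows "m \<le> sync_det \<alpha> \<beta> \<gamma> k U V"
proof -
  have affine: "sync_det \<alpha> \<beta> \<gamma> k U W = k * \<alpha> * U + k * (k - \<gamma>) + W * (3 * k * \<beta> - \<alpha>^2 * U)"
    for W by (simp add: sync_det_def algebra_simps)
  show ?thesis
  proof (cases "3 * k * \<beta> < \<alpha>^2 * U")
    case True
    then have "(R - U) * (3 * k * \<beta> - \<alpha>^2 * U) \<le> V * (3 * k * \<beta> - \<alpha>^2 * U)"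
      using \<open>U + V \<le> R\<close> by (intro mult_right_mono_neg) auto
    then show ?thesis using edge[OF True] affine[of V] affine[of "R - U"] by linarith
  next
    case False
    then have "V * (3 * k * \<beta> - \<alpha>^2 * U) \<ge> 0" using \<open>V \<ge> 0\<close> by simp
    moreover have "k * \<alpha> * U \<ge> 0" using assms(1-3) by simp
    ultimately show ?thesis using affine[of V] \<open>m \<le> k * (k - \<gamma>)\<close> by linarith
  qed
qed

lemma sync_det_edge_small_radius:
  assumes "k \<ge> 0" and "\<alpha> \<ge> 0" and "\<beta> \<ge> 0" and small: "\<alpha>^2 * R \<le> k * \<bar>\<alpha> - 3 * \<beta>\<bar>"
    and "0 \<le> U" and "U \<le> R" and steep: "3 * k * \<beta> < \<alpha>^2 * U"
  shows "k * (k - \<gamma>) \<le> sync_det \<alpha> \<beta> \<gamma> k U (R - U)"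
proof (cases "\<alpha> \<ge> 3 * \<beta>")
  case True
  have "sync_det \<alpha> \<beta> \<gamma> k U (R - U)
      = k * (k - \<gamma>) + 3 * k * \<beta> * R + U * (\<alpha>^2 * U + (k * (\<alpha> - 3 * \<beta>) - \<alpha>^2 * R))"
    by (simp add: sync_det_def algebra_simps power2_eq_square)
  moreover have "U * (\<alpha>^2 * U + (k * (\<alpha> - 3 * \<beta>) - \<alpha>^2 * R)) \<ge> 0"
    using True small \<open>0 \<le> U\<close> by simp
  moreover have "3 * k * \<beta> * R \<ge> 0" using assms(1,3,5,6) by simp
  ultimately show ?thesis by linarith
next
  case False
  have "\<alpha>^2 * U \<le> \<alpha>^2 * R" using \<open>U \<le> R\<close> by (simp add: mult_left_mono)
  also have "\<dots> \<le> k * (3 * \<beta> - \<alpha>)" using False small by simp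
  also have "\<dots> \<le> 3 * k * \<beta>" using assms(1,2) by (simp add: algebra_simps)
  finally show ?thesis using steep by simp
qed

lemma sync_det_edge_large_radius:
  assumes window: "\<bar>\<alpha>^2 * R - k * (\<alpha> + 3 * \<beta>)\<bar> < 2 * sqrt (3 * k^2 * \<alpha> * \<beta> + \<alpha>^2 * k * (k - \<gamma>))"
  obtains m where "m > 0" and "\<And>U. m \<le> sync_det \<alpha> \<beta> \<gamma> k U (R - U)"
proof -
  define Q where "Q = 3 * k^2 * \<alpha> * \<beta> + \<alpha>^2 * k * (k - \<gamma>)"
  define z where "z = \<alpha>^2 * R - k * (\<alpha> + 3 * \<beta>)"
  have "0 < sqrt Q" using window unfolding Q_def by linarith
  then have "Q > 0" by simp
  have "\<bar>z\<bar>^2 < (2 * sqrt Q)^2"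
    by (rule power_strict_mono) (use window in \<open>auto simp: Q_def z_def\<close>)
  then have gap: "4 * Q - z^2 > 0" using \<open>Q > 0\<close> by (simp add: power_mult_distrib)
  have "\<alpha> \<noteq> 0" using \<open>Q > 0\<close> unfolding Q_def by auto
  then have "\<alpha>^2 > 0" by simp
  show ?thesis
  proof (rule that)
    show "(4 * Q - z^2) / (4 * \<alpha>^2) > 0" using gap \<open>\<alpha>^2 > 0\<close> by simp
    fix U
    have "4 * \<alpha>^2 * sync_det \<alpha> \<beta> \<gamma> k U (R - U)
        = (2 * \<alpha>^2 * U + k * \<alpha> - 3 * k * \<beta> - \<alpha>^2 * R)^2 + (4 * Q - z^2)"
      unfolding Q_def z_def sync_det_def by (simp add: algebra_simps power2_eq_square)
    then have "4 * Q - z^2 \<le> 4 * \<alpha>^2 * sync_det \<alpha> \<beta> \<gamma> k U (R - U)" by simp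
    then show "(4 * Q - z^2) / (4 * \<alpha>^2) \<le> sync_det \<alpha> \<beta> \<gamma> k U (R - U)"
      using \<open>\<alpha>^2 > 0\<close> by (simp add: divide_le_eq mult.commute)
  qed
qed

lemma sync_det_uniform_lower_bound:
  assumes "k > 0" and "\<alpha> \<ge> 0" and "\<beta> \<ge> 0" and "\<gamma> < 0"
    and regime: "\<alpha>^2 * R \<le> k * \<bar>\<alpha> - 3 * \<beta>\<bar>
      \<or> \<bar>\<alpha>^2 * R - k * (\<alpha> + 3 * \<beta>)\<bar> < 2 * sqrt (3 * k^2 * \<alpha> * \<beta> + \<alpha>^2 * k * (k - \<gamma>))"
  obtains m where "m > 0"
    and "\<And>U V. 0 \<le> U \<Longrightarrow> 0 \<le> V \<Longrightarrow> U + V \<le> R \<Longrightarrow> m \<le> sync_det \<alpha> \<beta> \<gamma> k U V"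
proof -
  have "k * (k - \<gamma>) > 0" using \<open>k > 0\<close> \<open>\<gamma> < 0\<close> by simp
  from regime show ?thesis
  proof
    assume small: "\<alpha>^2 * R \<le> k * \<bar>\<alpha> - 3 * \<beta>\<bar>"
    show ?thesis
    proof (rule that[OF \<open>k * (k - \<gamma>) > 0\<close>])
      fix U V :: real assume U: "0 \<le> U" and V: "0 \<le> V" and UV: "U + V \<le> R"
      then have "U \<le> R" by linarith
      then show "k * (k - \<gamma>) \<le> sync_det \<alpha> \<beta> \<gamma> k U V"
        using assms(1-3) sync_det_edge_small_radius[OF _ _ _ small U]
        by (intro sync_det_ge_of_edge[OF _ _ U V UV order.refl]) simp_all
    qed
  next
    assume large:
      "\<bar>\<alpha>^2 * R - k * (\<alpha> + 3 * \<beta>)\<bar> < 2 * sqrt (3 * k^2 * \<alpha> * \<beta> + \<alpha>^2 * k * (k - \<gamma>))"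
    obtain m where "m > 0" and edge: "\<And>U. m \<le> sync_det \<alpha> \<beta> \<gamma> k U (R - U)"
      using sync_det_edge_large_radius[OF large] by blast
    show ?thesis
    proof (rule that)
      show "min m (k * (k - \<gamma>)) > 0" using \<open>m > 0\<close> \<open>k * (k - \<gamma>) > 0\<close> by simp
      fix U V :: real assume U: "0 \<le> U" and V: "0 \<le> V" and UV: "U + V \<le> R"
      have "min m (k * (k - \<gamma>)) \<le> sync_det \<alpha> \<beta> \<gamma> k U (R - U)"
        using edge[of U] by linarith
      then show "min m (k * (k - \<gamma>)) \<le> sync_det \<alpha> \<beta> \<gamma> k U V"
        using assms(1,2) by (intro sync_det_ge_of_edge[OF _ _ U V UV min.cobounded2]) simp_all
    qed
  qed
qed

lemma coupled_solution_stays_in_disk: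
  assumes "\<alpha> \<ge> 0" and "\<beta> \<ge> 0" and "\<gamma> \<le> 0" and "\<omega>^2 = 1" and "c * a \<ge> 0"
    and sol: "coupled_solution \<alpha> \<beta> \<gamma> \<omega> c a N x y"
    and init: "\<And>i. i < N \<Longrightarrow> x 0 i^2 + y 0 i^2 \<le> R"
    and "i < N" and "t \<ge> 0"
  shows "x t i^2 + y t i^2 \<le> R"
proof -
  define E where "E s l = x s l^2 + y s l^2" for s l
  define E' where "E' s l = 2 * x s l * coupled_rhs_x (c * a) N (x s) (y s) l
                           + 2 * y s l * coupled_rhs_y \<alpha> \<beta> \<gamma> \<omega> (c * a) N (x s) (y s) l" for s l
  define \<Phi> where "\<Phi> s = (\<Sum>l<N. pos_sq (E s l - R))" for s
  have "(\<Phi> has_real_derivative (\<Sum>l<N. 2 * max (E s l - R) 0 * E' s l)) (at s within {0..})"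
    if "s \<ge> 0" for s
    unfolding \<Phi>_def
  proof (rule DERIV_sum, rule DERIV_chain2[OF has_real_derivative_pos_sq])
    fix l assume "l \<in> {..<N}"
    then show "((\<lambda>s. E s l - R) has_real_derivative E' s l) (at s within {0..})"
      unfolding E_def E'_def
      by (auto intro!: derivative_eq_intros coupled_solution_has_derivative[OF sol] that)
  qed
  moreover have "(\<Sum>l<N. 2 * max (E s l - R) 0 * E' s l) \<le> 0" for s
  proof -
    have "(\<Sum>l<N. 2 * max (E s l - R) 0 * E' s l)
        \<le> (\<Sum>l<N. 2 * max (E s l - R) 0 * (c * a / real N * (\<Sum>j<N. E s j - E s l)))"
      unfolding E'_def E_def
      by (intro sum_mono mult_left_mono energy_rhs_le_laplacian) (use assms(1-5) in auto)
    also have "\<dots> = 2 * (c * a / real N)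
        * (\<Sum>l<N. max (E s l - R) 0 * (\<Sum>j<N. (E s j - R) - (E s l - R)))"
      by (simp add: sum_distrib_left mult_ac)
    also have "\<dots> \<le> 0"
      using sum_pos_part_mult_laplacian_nonpos[of "\<lambda>l. E s l - R" N] \<open>c * a \<ge> 0\<close>
      by (intro mult_nonneg_nonpos) simp_all
    finally show ?thesis .
  qed
  ultimately have "\<Phi> t \<le> \<Phi> 0"
    using \<open>t \<ge> 0\<close> by (rule nonincreasing_on_halfline)
  moreover have "\<Phi> 0 = 0"
    unfolding \<Phi>_def using init by (intro sum.neutral) (auto simp: pos_sq_def E_def)
  moreover have "pos_sq (E t i - R) \<le> \<Phi> t"
    unfolding \<Phi>_def by (rule member_le_sum) (use \<open>i < N\<close> in \<open>auto simp: pos_sq_def\<close>)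
  ultimately have "(max (E t i - R) 0)^2 \<le> 0"
    unfolding pos_sq_def by linarith
  then show ?thesis
    by (simp add: E_def)
qed

lemma coupled_solution_pair_decay:
  fixes \<alpha> \<beta> \<gamma> \<omega> c a R m :: real
  defines "\<kappa> \<equiv> m / (2 * (c * a) + (\<alpha> + 3 * \<beta>) * R - \<gamma>)"
  assumes "\<alpha> \<ge> 0" and "\<beta> \<ge> 0" and "\<omega>^2 = 1" and "c * a > 0"
    and sol: "coupled_solution \<alpha> \<beta> \<gamma> \<omega> c a N x y"
    and disk: "\<And>l s. l < N \<Longrightarrow> s \<ge> 0 \<Longrightarrow> x s l^2 + y s l^2 \<le> R"
    and "m > 0" and det: "\<And>U V. 0 \<le> U \<Longrightarrow> 0 \<le> V \<Longrightarrow> U + V \<le> R \<Longrightarrow> m \<le> sync_det \<alpha> \<beta> \<gamma> (c * a) U V"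
    and "i < N" and "j < N" and "t \<ge> 0"
  shows "(x t i - x t j)^2 + (y t i - y t j)^2
           \<le> ((x 0 i - x 0 j)^2 + (y 0 i - y 0 j)^2) * exp (- 2 * \<kappa> * t)"
proof -
  define k where "k = c * a"
  have "k > 0" using \<open>c * a > 0\<close> by (simp add: k_def)
  define rx where "rx s = coupled_rhs_x k N (x s) (y s)" for s
  define ry where "ry s = coupled_rhs_y \<alpha> \<beta> \<gamma> \<omega> k N (x s) (y s)" for s
  define D where "D s = (x s i - x s j)^2 + (y s i - y s j)^2" for s
  define D' where "D' s = 2 * (x s i - x s j) * (rx s i - rx s j) + 2 * (y s i - y s j) * (ry s i - ry s j)"
    for s
  have "(D has_real_derivative D' s) (at s within {0..})" if "s \<ge> 0" for s
    unfolding D_def D'_def rx_def ry_def k_def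
    by (auto intro!: derivative_eq_intros coupled_solution_has_derivative[OF sol] that
        \<open>i < N\<close> \<open>j < N\<close> simp: algebra_simps)
  moreover have "D' s \<le> - (2 * \<kappa>) * D s" if s: "s \<ge> 0" for s
  proof -
    define u where "u = x s i - x s j"
    define v where "v = y s i - y s j"
    obtain X Y where XY: "X^2 + Y^2 \<le> R"
      and mean: "damping \<alpha> \<beta> \<gamma> (x s i) (y s i) - damping \<alpha> \<beta> \<gamma> (x s j) (y s j)
                   = 2 * \<alpha> * X * Y * u + (\<alpha> * X^2 + 3 * \<beta> * Y^2 - \<gamma>) * v"
      using damping_diff_mean_value[OF disk[OF \<open>i < N\<close> s] disk[OF \<open>j < N\<close> s]]
      unfolding u_def v_def by blast
    define q where "q = \<alpha> * X^2 + 3 * \<beta> * Y^2 - \<gamma> + k"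
    have "N > 0" using \<open>i < N\<close> by simp
    have dx: "rx s i - rx s j = v - k * u"
      unfolding rx_def u_def v_def by (rule coupled_rhs_diff(1)[OF \<open>N > 0\<close> \<open>\<omega>^2 = 1\<close>])
    have dy: "ry s i - ry s j = - (2 * \<alpha> * X * Y * u + (\<alpha> * X^2 + 3 * \<beta> * Y^2 - \<gamma>) * v) - u - k * v"
      using mean unfolding ry_def coupled_rhs_diff(2)[OF \<open>N > 0\<close> \<open>\<omega>^2 = 1\<close>] u_def v_def
      by linarith
    have "D' s = 2 * u * (rx s i - rx s j) + 2 * v * (ry s i - ry s j)"
      unfolding D'_def u_def v_def by simp
    also have "\<dots> = - 2 * (k * u^2 + 2 * (\<alpha> * X * Y) * u * v + q * v^2)"
      unfolding dx dy q_def by (simp add: algebra_simps power2_eq_square)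
    finally have "D' s = - 2 * (k * u^2 + 2 * (\<alpha> * X * Y) * u * v + q * v^2)" .
    moreover have "m / (2 * (c * a) + (\<alpha> + 3 * \<beta>) * R - \<gamma>) * (u^2 + v^2)
        \<le> k * u^2 + 2 * (\<alpha> * X * Y) * u * v + q * v^2"
    proof (rule quadratic_form_ge_det_div_trace[OF \<open>k > 0\<close> \<open>m > 0\<close>])
      show "m \<le> k * q - (\<alpha> * X * Y)^2"
        using det[of "X^2" "Y^2"] XY by (simp add: sync_det_def q_def k_def power_mult_distrib)
      have "X^2 \<le> R" "Y^2 \<le> R" using XY by (smt (verit) zero_le_power2)+
      then have "\<alpha> * X^2 \<le> \<alpha> * R" "\<beta> * Y^2 \<le> \<beta> * R"
        using \<open>\<alpha> \<ge> 0\<close> \<open>\<beta> \<ge> 0\<close> by (simp_all add: mult_left_mono)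
      then show "k + q \<le> 2 * (c * a) + (\<alpha> + 3 * \<beta>) * R - \<gamma>"
        by (simp add: q_def k_def algebra_simps)
    qed
    ultimately show ?thesis
      unfolding \<kappa>_def D_def u_def v_def by simp
  qed
  ultimately have "D t \<le> D 0 * exp (- (2 * \<kappa>) * t)"
    using \<open>t \<ge> 0\<close> by (rule exp_decay_of_deriv_le)
  then show ?thesis
    by (simp add: D_def)
qed

text \<open>
  Cases (2) and (3) of the theorem together are the small radius regime, and case (1) is its
  instance \<open>\<alpha> = 0\<close>; the side conditions \<open>3\<beta>r\<^sup>2 > \<gamma> - ca\<close> and \<open>\<alpha>r\<^sup>2 > \<gamma> - ca\<close> hold anyway
  since \<open>\<gamma> < 0\<close>. Case (4) is the large radius regime.
\<close>

lemma theorem_conditions_imp_regime: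
  fixes \<alpha> \<beta> \<gamma> c a r :: real
  assumes "\<alpha> \<ge> 0" and "\<beta> \<ge> 0" and "c * a > 0"
    and cond:
      "(\<alpha> = 0 \<and> 3 * \<beta> * r^2 > \<gamma> - c * a)
       \<or> (\<alpha> \<noteq> 0 \<and> \<alpha> > 3 * \<beta> \<and> r^2 \<le> (c*a*\<alpha> - 3*c*a*\<beta>) / \<alpha>^2
            \<and> 3 * \<beta> * r^2 > \<gamma> - c * a)
       \<or> (\<alpha> \<noteq> 0 \<and> \<alpha> < 3 * \<beta> \<and> r^2 \<le> (3*c*a*\<beta> - c*a*\<alpha>) / \<alpha>^2
            \<and> \<alpha> * r^2 > \<gamma> - c * a)
       \<or> (3*c*a*\<alpha>*\<beta> + \<alpha>^2 * (c*a - \<gamma>) > 0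
            \<and> r^2 \<ge> max ((c*a*\<alpha> - 3*c*a*\<beta>) / \<alpha>^2) ((3*c*a*\<beta> - c*a*\<alpha>) / \<alpha>^2)
            \<and> (c*a*\<alpha> + 3*c*a*\<beta>
                 - 2 * sqrt (3 * c^2 * a^2 * \<alpha> * \<beta> + \<alpha>^2 * c * a * (c*a - \<gamma>))) / \<alpha>^2 < r^2
            \<and> r^2 < (c*a*\<alpha> + 3*c*a*\<beta>
                 + 2 * sqrt (3 * c^2 * a^2 * \<alpha> * \<beta> + \<alpha>^2 * c * a * (c*a - \<gamma>))) / \<alpha>^2)"
  shows "\<alpha>^2 * r^2 \<le> c * a * \<bar>\<alpha> - 3 * \<beta>\<bar>
    \<or> \<bar>\<alpha>^2 * r^2 - c * a * (\<alpha> + 3 * \<beta>)\<bar>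
        < 2 * sqrt (3 * (c * a)^2 * \<alpha> * \<beta> + \<alpha>^2 * (c * a) * (c * a - \<gamma>))"
  using cond
proof (elim disjE conjE)
  assume "\<alpha> = 0"
  then show ?thesis using \<open>c * a > 0\<close> by simp
next
  assume "\<alpha> \<noteq> 0" "\<alpha> > 3 * \<beta>" "r^2 \<le> (c*a*\<alpha> - 3*c*a*\<beta>) / \<alpha>^2"
  then have "\<alpha>^2 * r^2 \<le> c * a * (\<alpha> - 3 * \<beta>)"
    by (simp add: le_divide_eq algebra_simps)
  then show ?thesis using \<open>\<alpha> > 3 * \<beta>\<close> by simp
next
  assume "\<alpha> \<noteq> 0" "\<alpha> < 3 * \<beta>" "r^2 \<le> (3*c*a*\<beta> - c*a*\<alpha>) / \<alpha>^2"
  then have "\<alpha>^2 * r^2 \<le> c * a * (3 * \<beta> - \<alpha>)"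
    by (simp add: le_divide_eq algebra_simps)
  then show ?thesis using \<open>\<alpha> < 3 * \<beta>\<close> by simp
next
  define s where "s = sqrt (3 * (c * a)^2 * \<alpha> * \<beta> + \<alpha>^2 * (c * a) * (c * a - \<gamma>))"
  have s: "sqrt (3 * c^2 * a^2 * \<alpha> * \<beta> + \<alpha>^2 * c * a * (c*a - \<gamma>)) = s"
    unfolding s_def by (simp add: power_mult_distrib mult.assoc)
  assume lower: "(c*a*\<alpha> + 3*c*a*\<beta> - 2 * sqrt (3 * c^2 * a^2 * \<alpha> * \<beta> + \<alpha>^2 * c * a * (c*a - \<gamma>)))
      / \<alpha>^2 < r^2"
    and upper: "r^2 < (c*a*\<alpha> + 3*c*a*\<beta> + 2 * sqrt (3 * c^2 * a^2 * \<alpha> * \<beta> + \<alpha>^2 * c * a * (c*a - \<gamma>)))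
      / \<alpha>^2"
  have "\<alpha> \<noteq> 0" using lower upper by auto
  then have "\<alpha>^2 > 0" by simp
  then have "c * a * (\<alpha> + 3 * \<beta>) - 2 * s < \<alpha>^2 * r^2" "\<alpha>^2 * r^2 < c * a * (\<alpha> + 3 * \<beta>) + 2 * s"
    using lower upper unfolding s by (simp_all add: divide_less_eq less_divide_eq algebra_simps)
  then show ?thesis unfolding s_def by (simp add: abs_less_iff)
qed

theorem theorem4p8:
  fixes \<alpha> \<beta> \<gamma> \<omega> c a r :: real and N :: nat
    and x y :: "real \<Rightarrow> nat \<Rightarrow> real"
  assumes "\<alpha> \<ge> 0" and "\<beta> \<ge> 0" and "\<gamma> < 0" and "\<omega>^2 = 1"
    and "c * a > 0" and "N \<ge> 2" and "r > 0"
    and cond: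
      "(\<alpha> = 0 \<and> 3 * \<beta> * r^2 > \<gamma> - c * a)
       \<or> (\<alpha> \<noteq> 0 \<and> \<alpha> > 3 * \<beta> \<and> r^2 \<le> (c*a*\<alpha> - 3*c*a*\<beta>) / \<alpha>^2
            \<and> 3 * \<beta> * r^2 > \<gamma> - c * a)
       \<or> (\<alpha> \<noteq> 0 \<and> \<alpha> < 3 * \<beta> \<and> r^2 \<le> (3*c*a*\<beta> - c*a*\<alpha>) / \<alpha>^2
            \<and> \<alpha> * r^2 > \<gamma> - c * a)
       \<or> (3*c*a*\<alpha>*\<beta> + \<alpha>^2 * (c*a - \<gamma>) > 0
            \<and> r^2 \<ge> max ((c*a*\<alpha> - 3*c*a*\<beta>) / \<alpha>^2) ((3*c*a*\<beta> - c*a*\<alpha>) / \<alpha>^2)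
            \<and> (c*a*\<alpha> + 3*c*a*\<beta>
                 - 2 * sqrt (3 * c^2 * a^2 * \<alpha> * \<beta> + \<alpha>^2 * c * a * (c*a - \<gamma>))) / \<alpha>^2 < r^2
            \<and> r^2 < (c*a*\<alpha> + 3*c*a*\<beta>
                 + 2 * sqrt (3 * c^2 * a^2 * \<alpha> * \<beta> + \<alpha>^2 * c * a * (c*a - \<gamma>))) / \<alpha>^2)"
    and sol: "coupled_solution \<alpha> \<beta> \<gamma> \<omega> c a N x y"
    and init: "\<forall>i<N. (x 0 i)^2 + (y 0 i)^2 \<le> r^2"
  shows "\<forall>i<N. \<forall>j<N. \<exists>C K. K > 0 \<and>
           (\<forall>t\<ge>0. \<bar>x t i - x t j\<bar> + \<bar>y t i - y t j\<bar> \<le> C * exp (- K * t))"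
proof (intro allI impI)
  fix i j assume "i < N" "j < N"
  obtain m where "m > 0"
    and det: "\<And>U V. 0 \<le> U \<Longrightarrow> 0 \<le> V \<Longrightarrow> U + V \<le> r^2 \<Longrightarrow> m \<le> sync_det \<alpha> \<beta> \<gamma> (c * a) U V"
    using sync_det_uniform_lower_bound[OF assms(5,1-3) theorem_conditions_imp_regime[OF assms(1,2,5) cond]]
    by blast
  have disk: "\<And>l s. l < N \<Longrightarrow> s \<ge> 0 \<Longrightarrow> x s l^2 + y s l^2 \<le> r^2"
    using coupled_solution_stays_in_disk[OF assms(1,2) _ assms(4) _ sol] init assms(3,5) by simp
  define \<kappa> where "\<kappa> = m / (2 * (c * a) + (\<alpha> + 3 * \<beta>) * r^2 - \<gamma>)"
  have "(\<alpha> + 3 * \<beta>) * r^2 \<ge> 0" using assms(1,2) by simp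
  then have "\<kappa> > 0"
    unfolding \<kappa>_def using \<open>m > 0\<close> assms(3,5) by simp
  have "\<bar>x t i - x t j\<bar> + \<bar>y t i - y t j\<bar>
      \<le> sqrt (2 * ((x 0 i - x 0 j)^2 + (y 0 i - y 0 j)^2)) * exp (- \<kappa> * t)" if "t \<ge> 0" for t
    using coupled_solution_pair_decay[OF assms(1,2,4,5) sol disk \<open>m > 0\<close> det \<open>i < N\<close> \<open>j < N\<close> that]
    unfolding \<kappa>_def[symmetric] by (rule abs_add_abs_le_of_sq_le_exp)
  then show "\<exists>C K. K > 0 \<and> (\<forall>t\<ge>0. \<bar>x t i - x t j\<bar> + \<bar>y t i - y t j\<bar> \<le> C * exp (- K * t))"
    using \<open>\<kappa> > 0\<close> by blast
qed

end
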